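(* Fix $\delta>0$ and let $s_\infty:=1/\mathcal E_{\delta,\infty}(\tau_1)$. For every $\varepsilon>0$ there exists $T_0=T_0(\varepsilon)\in\mathbb N$ such that $$\lim_{N\to\infty}\sup_{T\in2\mathbb N,\,T\ge T_0}\mathcal P_{\delta,T}\Big(\Big|\frac{L_N}{N}-s_\infty\Big|>\varepsilon\Big)=0,$$ where $L_N:=\max\{j\ge0:\tau_j\le N\}$.
   Context: $(S_n)$ is the simple symmetric random walk on $\mathbb Z$ started at $0$ with law $\mathbf P$. For $T\in2\mathbb N\cup\{\infty\}$ (convention $\infty\mathbb Z=\{0\}$), $\tau_1^T:=\inf\{n>0:S_n\in T\mathbb Z\}$, $q_T(n):=\mathbf P(\tau^T_1=n)$, $Q_T(\lambda):=\mathbf E[e^{-\lambda\tau^T_1}]$. For $\delta>0$, $\phi(\delta,T)$ is the unique real solution $\lambda$ of $Q_T(\lambda)=e^{-\delta}$. Under $\mathcal P_{\delta,T}$ (expectation $\mathcal E_{\delta,T}$), $(\xi_i)_{i\ge1}$ are i.i.d. with $\mathcal P_{\delta,T}(\xi_1=n)=e^\delta q_T(n)e^{-\phi(\delta,T)n}$, $n\in\mathbb N$; $\tau_0:=0$, $\tau_n:=\xi_1+\dots+\xi_n$. *)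

theory Defs
  imports "HOL-Probability.Probability"
begin

text \<open>Period T in 2N or infinity, encoded as enat; T Z with the convention infinity Z = {0}.\<close>
definition inTZ :: "enat \<Rightarrow> int \<Rightarrow> bool" where
  "inTZ T x = (case T of \<infinity> \<Rightarrow> x = 0 | enat t \<Rightarrow> int t dvd x)"

definition walk :: "bool list \<Rightarrow> nat \<Rightarrow> int" where
  "walk xs k = (\<Sum>i<k. if xs ! i then 1 else -1)"

text \<open>q_T(n) = P(tau_1^T = n) for the simple symmetric random walk: the event depends
  only on the first n steps, all 2^n step sequences being equally likely.\<close>
definition qT :: "enat \<Rightarrow> nat \<Rightarrow> real" where
  "qT T n = real (card {xs :: bool list. length xs = n \<and> 0 < n \<and> inTZ T (walk xs n) \<and>
                        (\<forall>k. 0 < k \<and> k < n \<longrightarrow> \<not> inTZ T (walk xs k))}) / 2 ^ n"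

definition QT :: "enat \<Rightarrow> real \<Rightarrow> real" where
  "QT T lam = (\<Sum>n. qT T n * exp (- lam * real n))"

definition phi :: "real \<Rightarrow> enat \<Rightarrow> real" where
  "phi \<delta> T = (THE lam. summable (\<lambda>n. qT T n * exp (- lam * real n)) \<and> QT T lam = exp (- \<delta>))"

text \<open>Law of xi_1 under P_{delta,T} on N.\<close>
definition xi_law :: "real \<Rightarrow> enat \<Rightarrow> nat measure" where
  "xi_law \<delta> T = density (count_space UNIV)
      (\<lambda>n. ennreal (exp \<delta> * qT T n * exp (- phi \<delta> T * real n)))"

text \<open>P_{delta,T}: law of the i.i.d. sequence; coordinate i is xi_{i+1}.\<close>
definition Pdt :: "real \<Rightarrow> enat \<Rightarrow> (nat \<Rightarrow> nat) measure" where
  "Pdt \<delta> T = (\<Pi>\<^sub>M i\<in>(UNIV :: nat set). xi_law \<delta> T)"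

definition tau :: "(nat \<Rightarrow> nat) \<Rightarrow> nat \<Rightarrow> nat" where
  "tau \<omega> j = (\<Sum>i<j. \<omega> i)"

definition LN :: "nat \<Rightarrow> (nat \<Rightarrow> nat) \<Rightarrow> nat" where
  "LN N \<omega> = Max {j. tau \<omega> j \<le> N}"

definition s_inf :: "real \<Rightarrow> real" where
  "s_inf \<delta> = 1 / (\<integral>n. real n \<partial>(xi_law \<delta> \<infinity>))"

end

theory Submission
  imports Defs
begin

(*
  Under P_{delta,T} the increments xi_i are i.i.d. with law
  p_T(n) = e^delta q_T(n) e^{-phi(delta,T) n}, mean m_T and second moment V_T.
  If L_N/N deviates from s by more than eps while |1/m_T - s| < eps/2, then tau_j
  deviates from j m_T by at least N eps/4 at one of the two indices
  j ~ N (1/m_T +- eps/2), and Chebyshev's inequality bounds this by O(V_T / N).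
  It therefore suffices that V_T is bounded and 1/m_T -> s_inf, uniformly in large T.
*)

section \<open>Path combinatorics of the simple random walk\<close>

lemma walk_0 [simp]: "walk xs 0 = 0"
  by (simp add: walk_def)

lemma walk_Suc: "walk xs (Suc k) = walk xs k + (if xs ! k then 1 else -1)"
  by (simp add: walk_def)

lemma abs_walk_le: "\<bar>walk xs k\<bar> \<le> int k"
proof (induction k)
  case (Suc k)
  have "\<bar>walk xs k + (if xs ! k then 1 else -1)\<bar> \<le> \<bar>walk xs k\<bar> + 1" by (simp add: abs_if)
  then show ?case using Suc.IH by (simp add: walk_Suc)
qed simp

lemma walk_append_prefix: "i \<le> length ys \<Longrightarrow> walk (ys @ zs) i = walk ys i"
  unfolding walk_def by (intro sum.cong) (auto simp: nth_append)

lemma walk_append: "walk (ys @ zs) (length ys + j) = walk ys (length ys) + walk zs j"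
  by (induction j) (simp_all add: walk_append_prefix walk_Suc nth_append)

definition zero_paths :: "nat \<Rightarrow> bool list set" where
  "zero_paths n = {xs. length xs = n \<and> walk xs n = 0}"

definition first_return_paths :: "nat \<Rightarrow> bool list set" where
  "first_return_paths n = {xs. length xs = n \<and> 0 < n \<and> walk xs n = 0 \<and>
                              (\<forall>k. 0 < k \<and> k < n \<longrightarrow> walk xs k \<noteq> 0)}"

lemma finite_zero_paths [simp]: "finite (zero_paths n)"
  by (rule finite_subset[OF _ finite_lists_length_eq[of "UNIV::bool set" n]])
     (auto simp: zero_paths_def)

lemma finite_first_return_paths [simp]: "finite (first_return_paths n)"
  by (rule finite_subset[OF _ finite_lists_length_eq[of "UNIV::bool set" n]])
     (auto simp: first_return_paths_def)

lemma qT_inf: "qT \<infinity> n = real (card (first_return_paths n)) / 2 ^ n"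
  unfolding qT_def first_return_paths_def inTZ_def by simp

text \<open>Before time T the walk cannot reach a nonzero multiple of T, so
  the periodic and the non-periodic first-hitting laws agree.\<close>

lemma qT_fin: assumes "n < T" shows "qT (enat T) n = qT \<infinity> n"
proof -
  have hit_iff: "inTZ (enat T) (walk xs k) \<longleftrightarrow> walk xs k = 0" if "k \<le> n" for xs k
  proof -
    have "\<bar>walk xs k\<bar> < int T" using abs_walk_le[of xs k] that assms by linarith
    then show ?thesis unfolding inTZ_def using dvd_imp_le_int[of "walk xs k" "int T"] by force
  qed
  have "{xs :: bool list. length xs = n \<and> 0 < n \<and> inTZ (enat T) (walk xs n) \<and>
           (\<forall>k. 0 < k \<and> k < n \<longrightarrow> \<not> inTZ (enat T) (walk xs k))} = first_return_paths n"
    unfolding first_return_paths_def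
  proof (intro Collect_cong iffI; elim conjE)
    fix xs :: "bool list"
    assume "length xs = n" "0 < n" "inTZ (enat T) (walk xs n)"
      "\<forall>k. 0 < k \<and> k < n \<longrightarrow> \<not> inTZ (enat T) (walk xs k)"
    then show "length xs = n \<and> 0 < n \<and> walk xs n = 0 \<and> (\<forall>k. 0 < k \<and> k < n \<longrightarrow> walk xs k \<noteq> 0)"
      using hit_iff[of n xs] hit_iff[of _ xs] by (auto dest: less_imp_le)
  next
    fix xs :: "bool list"
    assume "length xs = n" "0 < n" "walk xs n = 0" "\<forall>k. 0 < k \<and> k < n \<longrightarrow> walk xs k \<noteq> 0"
    then show "length xs = n \<and> 0 < n \<and> inTZ (enat T) (walk xs n) \<and>
               (\<forall>k. 0 < k \<and> k < n \<longrightarrow> \<not> inTZ (enat T) (walk xs k))"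
      using hit_iff[of n xs] hit_iff[of _ xs] by (auto dest: less_imp_le)
  qed
  then show ?thesis unfolding qT_def by (simp add: first_return_paths_def inTZ_def)
qed

lemma qT_nonneg: "0 \<le> qT T n"
  unfolding qT_def by simp

lemma qT_0 [simp]: "qT T 0 = 0"
  unfolding qT_def by simp

lemma qT_le1: "qT T n \<le> 1"
proof -
  have "card {xs :: bool list. length xs = n \<and> 0 < n \<and> inTZ T (walk xs n) \<and>
               (\<forall>k. 0 < k \<and> k < n \<longrightarrow> \<not> inTZ T (walk xs k))} \<le> card {xs::bool list. length xs = n}"
    by (intro card_mono) (auto intro: finite_subset[OF _ finite_lists_length_eq[of "UNIV::bool set" n]])
  also have "\<dots> = 2 ^ n" using card_lists_length_eq[of "UNIV::bool set" n] by simp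
  finally show ?thesis unfolding qT_def by (simp add: divide_le_eq_1)
qed

text \<open>First-return decomposition: a path returning to 0 at time n splits uniquely
  at its first return time k into a first-return path and a returning path.\<close>

definition split_paths :: "nat \<Rightarrow> nat \<Rightarrow> bool list set" where
  "split_paths n k = (\<lambda>(ys, zs). ys @ zs) ` (first_return_paths k \<times> zero_paths (n - k))"

lemma card_split_paths:
  "card (split_paths n k) = card (first_return_paths k) * card (zero_paths (n - k))"
proof -
  have "inj_on (\<lambda>(ys, zs). ys @ zs) (first_return_paths k \<times> zero_paths (n - k))"
    by (auto simp: inj_on_def first_return_paths_def)
  then show ?thesis unfolding split_paths_def by (simp add: card_image card_cartesian_product)
qed

lemma zero_paths_decomp:
  assumes "0 < n" shows "zero_paths n = (\<Union>k\<in>{1..n}. split_paths n k)"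
proof
  show "(\<Union>k\<in>{1..n}. split_paths n k) \<subseteq> zero_paths n"
  proof clarify
    fix k xs assume k: "k \<in> {1..n}" and xs: "xs \<in> split_paths n k"
    then obtain ys zs where yz: "xs = ys @ zs" "ys \<in> first_return_paths k" "zs \<in> zero_paths (n - k)"
      unfolding split_paths_def by auto
    have "walk xs n = walk ys (length ys) + walk zs (n - k)"
      using walk_append[of ys zs "n - k"] yz k by (simp add: first_return_paths_def)
    then show "xs \<in> zero_paths n" using yz k by (simp add: first_return_paths_def zero_paths_def)
  qed
next
  show "zero_paths n \<subseteq> (\<Union>k\<in>{1..n}. split_paths n k)"
  proof
    fix xs assume xs: "xs \<in> zero_paths n"
    define k where "k = (LEAST k. 0 < k \<and> walk xs k = 0)"
    have len: "length xs = n" and ret: "0 < n \<and> walk xs n = 0"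
      using xs assms by (simp_all add: zero_paths_def)
    have "0 < k \<and> walk xs k = 0" unfolding k_def by (rule LeastI[of _ n]) (rule ret)
    then have k: "0 < k" "walk xs k = 0" by auto
    have kn: "k \<le> n" unfolding k_def by (rule Least_le) (rule ret)
    have kmin: "walk xs i \<noteq> 0" if "0 < i" "i < k" for i
      using not_less_Least[of i "\<lambda>k. 0 < k \<and> walk xs k = 0"] that unfolding k_def by blast
    have prefix: "walk (take k xs) i = walk xs i" if "i \<le> k" for i
      using walk_append_prefix[of i "take k xs" "drop k xs"] that kn len by simp
    have "take k xs \<in> first_return_paths k"
      using k kn kmin len prefix by (auto simp: first_return_paths_def)
    moreover have "drop k xs \<in> zero_paths (n - k)"
      using walk_append[of "take k xs" "drop k xs" "n - k"] prefix[of k] k kn len ret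
      by (simp add: zero_paths_def)
    ultimately have "xs \<in> split_paths n k" unfolding split_paths_def
      by (intro image_eqI[of _ _ "(take k xs, drop k xs)"]) auto
    then show "xs \<in> (\<Union>k\<in>{1..n}. split_paths n k)" using k kn by auto
  qed
qed

lemma split_paths_disjoint:
  assumes "k < k'" shows "split_paths n k \<inter> split_paths n k' = {}"
proof (rule ccontr)
  assume "split_paths n k \<inter> split_paths n k' \<noteq> {}"
  then obtain ys zs ys' zs' where yz: "ys @ zs = ys' @ zs'"
    "ys \<in> first_return_paths k" "ys' \<in> first_return_paths k'"
    unfolding split_paths_def by auto
  have "walk ys' k = walk (ys @ zs) k"
    using yz walk_append_prefix[of k ys' zs'] assms by (simp add: first_return_paths_def)
  also have "\<dots> = 0"
    using yz walk_append_prefix[of k ys zs] by (simp add: first_return_paths_def)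
  finally show False using yz(2,3) assms by (auto simp: first_return_paths_def)
qed

definition return_prob :: "nat \<Rightarrow> real" where
  "return_prob n = real (card (zero_paths n)) / 2 ^ n"

lemma return_prob_0: "return_prob 0 = 1"
proof -
  have "zero_paths 0 = {[]}" by (auto simp: zero_paths_def)
  then show ?thesis by (simp add: return_prob_def)
qed

lemma return_prob_nonneg: "0 \<le> return_prob n"
  by (simp add: return_prob_def)

lemma renewal_equation:
  assumes "0 < n" shows "return_prob n = (\<Sum>k\<in>{1..n}. qT \<infinity> k * return_prob (n - k))"
proof -
  have "card (zero_paths n) = (\<Sum>k\<in>{1..n}. card (split_paths n k))"
    unfolding zero_paths_decomp[OF assms]
  proof (rule card_UN_disjoint)
    show "\<forall>i\<in>{1..n}. \<forall>j\<in>{1..n}. i \<noteq> j \<longrightarrow> split_paths n i \<inter> split_paths n j = {}"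
    proof (intro ballI impI)
      fix i j :: nat assume "i \<noteq> j"
      then show "split_paths n i \<inter> split_paths n j = {}"
        using split_paths_disjoint[of i j] split_paths_disjoint[of j i] by (cases "i < j") auto
    qed
  qed (auto simp: split_paths_def)
  then have "return_prob n = (\<Sum>k\<in>{1..n}. real (card (first_return_paths k) *
                                  card (zero_paths (n - k))) / 2 ^ n)"
    unfolding return_prob_def card_split_paths by (simp add: sum_divide_distrib)
  also have "\<dots> = (\<Sum>k\<in>{1..n}. qT \<infinity> k * return_prob (n - k))"
  proof (intro sum.cong refl)
    fix k assume "k \<in> {1..n}"
    then have "(2::real) ^ n = 2 ^ k * 2 ^ (n - k)" by (simp flip: power_add)
    then show "real (card (first_return_paths k) * card (zero_paths (n - k))) / 2 ^ n
               = qT \<infinity> k * return_prob (n - k)"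
      by (simp add: qT_inf return_prob_def)
  qed
  finally show ?thesis .
qed

lemma card_pm1_sum:
  "(\<Sum>i<m. if P i then 1 else -1 :: int) = 2 * int (card {i. i < m \<and> P i}) - int m"
proof (induction m)
  case (Suc m)
  have "{i. i < Suc m \<and> P i} = (if P m then insert m {i. i < m \<and> P i} else {i. i < m \<and> P i})"
    by (auto simp: less_Suc_eq)
  then show ?case using Suc by (simp add: card_insert_if)
qed simp

text \<open>A path with exactly n up-steps among 2n steps returns to 0.\<close>

lemma central_binomial_le_card_zero_paths: "(2 * n choose n) \<le> card (zero_paths (2 * n))"
proof -
  define \<S> where "\<S> = {S. S \<subseteq> {..<2*n} \<and> card S = n}"
  define g where "g S = map (\<lambda>i. i \<in> S) [0..<2*n]" for S :: "nat set"
  have "inj_on g \<S>"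
  proof (rule inj_onI)
    fix S S' assume "S \<in> \<S>" "S' \<in> \<S>" "g S = g S'"
    then have "i \<in> S \<longleftrightarrow> i \<in> S'" if "i < 2 * n" for i
      using arg_cong[OF \<open>g S = g S'\<close>, of "\<lambda>xs. xs ! i"] that by (simp add: g_def)
    then show "S = S'" using \<open>S \<in> \<S>\<close> \<open>S' \<in> \<S>\<close> by (auto simp: \<S>_def)
  qed
  moreover have "g ` \<S> \<subseteq> zero_paths (2 * n)"
  proof
    fix xs assume "xs \<in> g ` \<S>"
    then obtain S where S: "S \<subseteq> {..<2*n}" "card S = n" and xs: "xs = g S" by (auto simp: \<S>_def)
    have "walk (g S) (2 * n) = (\<Sum>i<2*n. if i \<in> S then 1 else -1)"
      unfolding walk_def g_def by (intro sum.cong) auto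
    also have "\<dots> = 2 * int (card {i. i < 2 * n \<and> i \<in> S}) - int (2 * n)" by (rule card_pm1_sum)
    also have "{i. i < 2 * n \<and> i \<in> S} = S" using S by auto
    finally show "xs \<in> zero_paths (2 * n)" using S xs by (simp add: zero_paths_def g_def)
  qed
  ultimately have "card \<S> \<le> card (zero_paths (2 * n))"
    using card_image[of g \<S>] card_mono[OF finite_zero_paths] by metis
  then show ?thesis using n_subsets[of "{..<2*n}" n] by (simp add: \<S>_def)
qed

text \<open>u_{2n} >= 4^n / (2n) / 4^n = 1 / (2n), via the central binomial coefficient.\<close>

lemma return_prob_even_lower:
  assumes "0 < n" shows "1 / (2 * real n) \<le> return_prob (2 * n)"
proof -
  have "4 ^ n / (2 * real n) \<le> real (2 * n choose n)"
    by (rule central_binomial_lower_bound[OF assms])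
  also have "\<dots> \<le> real (card (zero_paths (2 * n)))"
    using central_binomial_le_card_zero_paths by simp
  moreover have "(2::real) ^ (2 * n) = 4 ^ n" by (simp add: power_mult)
  ultimately show ?thesis unfolding return_prob_def by (simp add: field_simps)
qed

text \<open>The expected number of returns diverges, by comparison with the harmonic series.\<close>

lemma return_prob_sum_unbounded: "\<exists>N. B < (\<Sum>n\<le>N. return_prob n)"
proof -
  define M where "M = nat \<lceil>exp (2 * B)\<rceil>"
  have "exp (2 * B) < real M + 1" unfolding M_def by linarith
  then have "2 * B < ln (real M + 1)"
    using ln_less_cancel_iff[of "exp (2 * B)" "real M + 1"] by simp
  also have "\<dots> \<le> harm M" by (rule ln_le_harm)
  also have "harm M = 2 * (\<Sum>m\<in>{1..M}. 1 / (2 * real m))"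
    by (simp add: harm_def sum_distrib_left field_simps)
  also have "(\<Sum>m\<in>{1..M}. 1 / (2 * real m)) \<le> (\<Sum>m\<in>{1..M}. return_prob (2 * m))"
    by (intro sum_mono return_prob_even_lower) auto
  also have "\<dots> = (\<Sum>n\<in>(\<lambda>m. 2 * m) ` {1..M}. return_prob n)"
    by (subst sum.reindex) (auto simp: inj_on_def)
  also have "\<dots> \<le> (\<Sum>n\<le>2 * M. return_prob n)"
    by (intro sum_mono2) (auto simp: return_prob_nonneg)
  finally show ?thesis by (intro exI[of _ "2 * M"]) simp
qed

text \<open>Recurrence: if the first-return law had total mass at most rho < 1, the renewal
  equation would give U_N <= 1 + rho U_N for the partial sums U_N of return_prob,
  bounding them by 1/(1 - rho).\<close>

lemma recurrence:
  assumes "\<rho> < 1" shows "\<exists>K. \<rho> < (\<Sum>n\<le>K. qT \<infinity> n)"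
proof (rule ccontr)
  assume "\<not> ?thesis"
  then have mass: "(\<Sum>n\<le>K. qT \<infinity> n) \<le> \<rho>" for K by (simp add: not_less)
  define U where "U N = (\<Sum>n\<le>N. return_prob n)" for N
  have U_rec: "U N \<le> 1 + \<rho> * U N" for N
  proof -
    have renewal: "return_prob n = (if n = 0 then 1 else 0) + (\<Sum>k\<le>n. qT \<infinity> k * return_prob (n - k))"
      for n
    proof (cases "n = 0")
      case True then show ?thesis by (simp add: return_prob_0)
    next
      case False
      have "{..n} = insert 0 {1..n}" by auto
      then show ?thesis using renewal_equation[of n] False by simp
    qed
    have "U N = (\<Sum>n\<le>N. (if n = 0 then 1 else 0) + (\<Sum>k\<le>n. qT \<infinity> k * return_prob (n - k)))"
      unfolding U_def by (intro sum.cong refl renewal)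
    also have "\<dots> = 1 + (\<Sum>n\<le>N. \<Sum>k\<le>n. qT \<infinity> k * return_prob (n - k))"
      by (simp add: sum.distrib sum.delta)
    also have "(\<Sum>n\<le>N. \<Sum>k\<le>n. qT \<infinity> k * return_prob (n - k))
               = (\<Sum>(i,j)\<in>{(i,j). i + j \<le> N}. qT \<infinity> i * return_prob j)"
      by (rule sum.triangle_reindex_eq[symmetric])
    also have "\<dots> \<le> (\<Sum>(i,j)\<in>{..N} \<times> {..N}. qT \<infinity> i * return_prob j)"
      by (intro sum_mono2) (auto simp: qT_nonneg return_prob_nonneg)
    also have "\<dots> = (\<Sum>i\<le>N. qT \<infinity> i) * U N"
      unfolding U_def by (simp add: sum_product sum.cartesian_product)
    also have "\<dots> \<le> \<rho> * U N"
      using mass[of N] by (intro mult_right_mono) (auto simp: U_def return_prob_nonneg sum_nonneg)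
    finally show ?thesis by simp
  qed
  obtain N where "1 / (1 - \<rho>) < U N" using return_prob_sum_unbounded unfolding U_def by blast
  moreover have "U N * (1 - \<rho>) \<le> 1" using U_rec[of N] by (simp add: algebra_simps)
  ultimately show False using assms by (simp add: field_simps)
qed

section \<open>The Laplace transform of the first-hitting law and phi(delta,T)\<close>

lemma exp_pow: "exp (- lam * real n) = exp (- lam) ^ n"
  using exp_of_nat_mult[of n "- lam"] by (simp add: mult.commute)

lemma qT_exp_le_geometric: "qT T n * exp (- lam * real n) \<le> exp (- lam) ^ n"
  unfolding exp_pow using qT_le1[of T n] qT_nonneg[of T n] by (intro mult_left_le_one_le) auto

lemma qT_exp_antimono:
  "lam \<le> mu \<Longrightarrow> qT T n * exp (- mu * real n) \<le> qT T n * exp (- lam * real n)"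
  by (intro mult_left_mono qT_nonneg) (simp add: mult_right_mono)

text \<open>Since q_T is a sub-probability, Q_T converges for every positive argument.\<close>

lemma laplace_summable:
  assumes "0 < lam" shows "summable (\<lambda>n. qT T n * exp (- lam * real n))"
proof (rule summable_comparison_test[OF _ summable_geometric[of "exp (- lam)"]])
  show "\<exists>N. \<forall>n\<ge>N. norm (qT T n * exp (- lam * real n)) \<le> exp (- lam) ^ n"
    using qT_exp_le_geometric[of T] by (simp add: qT_nonneg)
qed (use assms in simp)

lemma laplace_summable_mono:
  assumes "summable (\<lambda>n. qT T n * exp (- lam * real n))" "lam \<le> mu"
  shows "summable (\<lambda>n. qT T n * exp (- mu * real n))"
  by (rule summable_comparison_test[OF _ assms(1)])
     (use assms(2) qT_exp_antimono[of lam mu T] in \<open>simp add: qT_nonneg\<close>)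

lemma QT_antimono:
  assumes "summable (\<lambda>n. qT T n * exp (- lam * real n))" "lam \<le> mu"
  shows "QT T mu \<le> QT T lam"
  unfolding QT_def using assms laplace_summable_mono[OF assms] by (intro suminf_le qT_exp_antimono) auto

text \<open>Strict monotonicity needs one positive weight q_T(n0) with n0 > 0.\<close>

lemma QT_strict_antimono:
  assumes "summable (\<lambda>n. qT T n * exp (- lam * real n))" "lam < mu"
    and "0 < qT T n0" "0 < n0"
  shows "QT T mu < QT T lam"
proof -
  have s_mu: "summable (\<lambda>n. qT T n * exp (- mu * real n))"
    using laplace_summable_mono[OF assms(1)] assms(2) by simp
  have "0 < (\<Sum>n. qT T n * exp (- lam * real n) - qT T n * exp (- mu * real n))"
  proof (rule suminf_pos2[where i=n0])
    show "summable (\<lambda>n. qT T n * exp (- lam * real n) - qT T n * exp (- mu * real n))"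
      using assms(1) s_mu by (rule summable_diff)
    show "0 \<le> qT T n * exp (- lam * real n) - qT T n * exp (- mu * real n)" for n
      using assms(2) qT_exp_antimono[of lam mu T n] by simp
    show "0 < qT T n0 * exp (- lam * real n0) - qT T n0 * exp (- mu * real n0)"
      using assms by (auto intro!: mult_strict_left_mono)
  qed
  also have "\<dots> = QT T lam - QT T mu"
    unfolding QT_def using assms(1) s_mu by (rule suminf_diff[symmetric])
  finally show ?thesis by simp
qed

lemma partial_le_QT:
  assumes "summable (\<lambda>n. qT T n * exp (- lam * real n))"
  shows "(\<Sum>n\<le>K. qT T n * exp (- lam * real n)) \<le> QT T lam"
  unfolding QT_def using assms by (intro sum_le_suminf) (auto simp: qT_nonneg)

lemma QT_le_geometric:
  assumes "0 < b" shows "QT T b \<le> exp (- b) / (1 - exp (- b))"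
proof -
  let ?x = "exp (- b)"
  have x1: "?x < 1" using assms by simp
  have s: "summable (\<lambda>n. qT T n * exp (- b * real n))" using laplace_summable[OF assms] .
  have "QT T b = (\<Sum>n. qT T (Suc n) * exp (- b * real (Suc n)))"
    unfolding QT_def using suminf_split_head[OF s] by simp
  also have "\<dots> \<le> (\<Sum>n. ?x * ?x ^ n)"
  proof (rule suminf_le)
    show "qT T (Suc n) * exp (- b * real (Suc n)) \<le> ?x * ?x ^ n" for n
      using qT_exp_le_geometric[of T "Suc n" b] by simp
    show "summable (\<lambda>n. qT T (Suc n) * exp (- b * real (Suc n)))"
      using s summable_Suc_iff[of "\<lambda>n. qT T n * exp (- b * real n)"] by simp
    show "summable (\<lambda>n. ?x * ?x ^ n)" using x1 by (intro summable_mult summable_geometric) simp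
  qed
  also have "\<dots> = ?x / (1 - ?x)"
    using suminf_mult[of "\<lambda>n. ?x ^ n" ?x] suminf_geometric[of ?x] summable_geometric[of ?x] x1
    by simp
  finally show ?thesis .
qed

text \<open>Q_T is small for large arguments, uniformly in T (q_T(0) = 0).\<close>

lemma QT_below:
  assumes "0 < \<delta>" "\<delta> + ln 3 \<le> b" shows "QT T b < exp (- \<delta>)"
proof -
  let ?x = "exp (- b)"
  have "?x \<le> exp (- (\<delta> + ln 3))" using assms(2) by simp
  also have "\<dots> = exp (- \<delta>) * exp (- ln 3)" by (simp flip: exp_add)
  also have "exp (- ln 3) = 1 / (3::real)" by (simp add: exp_minus)
  finally have x_small: "?x \<le> exp (- \<delta>) / 3" by simp
  moreover have "exp (- \<delta>) < 1" using assms(1) by simp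
  ultimately have x3: "?x \<le> 1 / 3" by linarith
  have b0: "0 < b" using assms ln_gt_zero[of "3::real"] by linarith
  have "QT T b \<le> ?x / (1 - ?x)" by (rule QT_le_geometric[OF b0])
  also have "\<dots> \<le> 3 / 2 * ?x"
  proof -
    have "0 \<le> ?x * (1 - 3 * ?x)" using x3 by (intro mult_nonneg_nonneg) auto
    then have "?x \<le> 3 / 2 * ?x * (1 - ?x)" by (simp add: algebra_simps)
    moreover have "0 < 1 - ?x" using x3 by linarith
    ultimately show ?thesis by (simp add: divide_le_eq)
  qed
  also have "\<dots> < exp (- \<delta>)" using x_small exp_gt_zero[of "- \<delta>"] by linarith
  finally show ?thesis .
qed

text \<open>Q_T is a power series in e^{-lambda}, hence continuous for lambda > 0.\<close>

lemma QT_isCont: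
  assumes "0 < lam" shows "isCont (QT T) lam"
proof -
  have QT_powser: "QT T = (\<lambda>l. \<Sum>n. qT T n * exp (- l) ^ n)"
    unfolding QT_def exp_pow ..
  have "summable (\<lambda>n. qT T n * exp (- (lam/2)) ^ n)"
    using laplace_summable[of "lam/2" T] assms unfolding exp_pow by simp
  then have "isCont (\<lambda>x. \<Sum>n. qT T n * x ^ n) (exp (- lam))"
    by (rule isCont_powser) (use assms in simp)
  moreover have exp_cont: "isCont (\<lambda>l::real. exp (- l)) lam" by (intro continuous_intros)
  ultimately show ?thesis unfolding QT_powser by (intro isCont_o2[OF exp_cont])
qed

lemma qT_pos_exists:
  assumes "0 < (\<Sum>n\<le>K. qT T n * g n)" shows "\<exists>n0. 0 < n0 \<and> 0 < qT T n0"
proof (rule ccontr)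
  assume no_pos: "\<not> ?thesis"
  have "qT T n = 0" for n
  proof (cases "n = 0")
    case False
    then have "\<not> 0 < qT T n" using no_pos by blast
    then show ?thesis using qT_nonneg[of T n] by simp
  qed simp
  then show False using assms by simp
qed

text \<open>Characterisation of phi(delta,T): if some partial sum of Q_T(a) exceeds e^{-delta},
  then Q_T = e^{-delta} has exactly one root (by the intermediate value theorem between
  a and a + delta + ln 3, and strict monotonicity), it lies to the right of a, and
  phi(delta,T) is that root.\<close>

lemma phi_char:
  assumes d: "0 < \<delta>" and a: "0 < a"
    and K: "exp (- \<delta>) < (\<Sum>n\<le>K. qT T n * exp (- a * real n))"
  shows "summable (\<lambda>n. qT T n * exp (- phi \<delta> T * real n))" "QT T (phi \<delta> T) = exp (- \<delta>)"
        "a < phi \<delta> T"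
proof -
  obtain n0 where n0: "0 < n0" "0 < qT T n0"
    using qT_pos_exists[where K=K and T=T] K exp_gt_zero[of "- \<delta>"] by (meson order.strict_trans)
  define b where "b = a + \<delta> + ln 3"
  have ab: "a < b" using d ln_gt_zero[of "3::real"] unfolding b_def by linarith
  have Qb: "QT T b < exp (- \<delta>)" using QT_below[OF d] a unfolding b_def by simp
  have Qa: "exp (- \<delta>) < QT T a"
    using K partial_le_QT[OF laplace_summable[OF a, of T], of K] by simp
  obtain l where l: "a \<le> l" "l \<le> b" "QT T l = exp (- \<delta>)"
  proof -
    have "\<forall>x. a \<le> x \<and> x \<le> b \<longrightarrow> isCont (QT T) x" using a QT_isCont by simp
    then show ?thesis using IVT2[of "QT T" b "exp (- \<delta>)" a] Qa Qb ab that by auto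
  qed
  have l_root: "summable (\<lambda>n. qT T n * exp (- l * real n)) \<and> QT T l = exp (- \<delta>)"
    using laplace_summable[of l] l a by simp
  have unique: "mu = l" if mu: "summable (\<lambda>n. qT T n * exp (- mu * real n)) \<and> QT T mu = exp (- \<delta>)"
    for mu
  proof (rule ccontr)
    assume "mu \<noteq> l"
    then consider "mu < l" | "l < mu" by linarith
    then show False
    proof cases
      case 1 then show False using QT_strict_antimono[of T mu l n0] mu n0 l by simp
    next
      case 2 then show False using QT_strict_antimono[of T l mu n0] l_root n0 l mu by simp
    qed
  qed
  have "phi \<delta> T = l" unfolding phi_def
    by (rule the_equality) (use l_root unique in blast)+
  moreover have "a \<noteq> l" using Qa l by auto
  ultimately show "summable (\<lambda>n. qT T n * exp (- phi \<delta> T * real n))"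
    "QT T (phi \<delta> T) = exp (- \<delta>)" "a < phi \<delta> T"
    using l_root l by auto
qed

lemma phi_less:
  assumes "0 < \<delta>" "0 < a" "exp (- \<delta>) < (\<Sum>n\<le>K. qT T n * exp (- a * real n))"
    and "0 < mu" "QT T mu < exp (- \<delta>)"
  shows "phi \<delta> T < mu"
proof (rule ccontr)
  assume "\<not> phi \<delta> T < mu"
  then have "QT T (phi \<delta> T) \<le> QT T mu"
    using QT_antimono[OF laplace_summable[OF assms(4)], of "phi \<delta> T"] by simp
  then show False using phi_char(2)[OF assms(1-3)] assms(5) by simp
qed

text \<open>Recurrence provides the hypothesis of phi_char for T = infinity, and then,
  because only finitely many q_T(n) are involved, for all large finite T.\<close>

lemma partial_fin:
  "K < T \<Longrightarrow> (\<Sum>n\<le>K. qT (enat T) n * g n) = (\<Sum>n\<le>K. qT \<infinity> n * g n)"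
  by (intro sum.cong refl) (auto simp: qT_fin)

lemma phi_witness:
  assumes "0 < \<delta>"
  obtains K a where "0 < a" "exp (- \<delta>) < (\<Sum>n\<le>K. qT \<infinity> n * exp (- a * real n))"
proof -
  obtain K where K: "exp (- \<delta>) < (\<Sum>n\<le>K. qT \<infinity> n)"
    using recurrence[of "exp (- \<delta>)"] assms by auto
  have "((\<lambda>a. \<Sum>n\<le>K. qT \<infinity> n * exp (- a * real n)) \<longlongrightarrow> (\<Sum>n\<le>K. qT \<infinity> n * exp (- 0 * real n)))
          (at_right 0)"
    by (intro tendsto_intros)
  then have "((\<lambda>a. \<Sum>n\<le>K. qT \<infinity> n * exp (- a * real n)) \<longlongrightarrow> (\<Sum>n\<le>K. qT \<infinity> n)) (at_right 0)"
    by simp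
  from order_tendstoD(1)[OF this K]
  have "eventually (\<lambda>a. 0 < a \<and> exp (- \<delta>) < (\<Sum>n\<le>K. qT \<infinity> n * exp (- a * real n)))
          (at_right (0::real))"
    using eventually_at_right_less[of "0::real"] by eventually_elim auto
  then obtain a where "0 < a" "exp (- \<delta>) < (\<Sum>n\<le>K. qT \<infinity> n * exp (- a * real n))"
    using eventually_happens[of _ "at_right (0::real)"] by auto
  then show ?thesis using that by blast
qed

lemma phi_inf:
  assumes "0 < \<delta>"
  shows "summable (\<lambda>n. qT \<infinity> n * exp (- phi \<delta> \<infinity> * real n))" "QT \<infinity> (phi \<delta> \<infinity>) = exp (- \<delta>)"
    "0 < phi \<delta> \<infinity>"
proof -
  obtain K a where "0 < a" "exp (- \<delta>) < (\<Sum>n\<le>K. qT \<infinity> n * exp (- a * real n))"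
    using phi_witness[OF assms] .
  from phi_char[OF assms this] \<open>0 < a\<close> show "summable (\<lambda>n. qT \<infinity> n * exp (- phi \<delta> \<infinity> * real n))"
    "QT \<infinity> (phi \<delta> \<infinity>) = exp (- \<delta>)" "0 < phi \<delta> \<infinity>" by auto
qed

lemma phi_fin:
  assumes "0 < \<delta>"
  obtains K where "\<And>T. K < T \<Longrightarrow> summable (\<lambda>n. qT (enat T) n * exp (- phi \<delta> (enat T) * real n))"
    "\<And>T. K < T \<Longrightarrow> QT (enat T) (phi \<delta> (enat T)) = exp (- \<delta>)"
proof -
  obtain K a where a: "0 < a" and K: "exp (- \<delta>) < (\<Sum>n\<le>K. qT \<infinity> n * exp (- a * real n))"
    using phi_witness[OF assms] .
  show ?thesis
  proof (rule that[of K])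
    fix T assume "K < T"
    then have "exp (- \<delta>) < (\<Sum>n\<le>K. qT (enat T) n * exp (- a * real n))"
      using K partial_fin[of K T] by simp
    from phi_char(1,2)[OF assms a this]
    show "summable (\<lambda>n. qT (enat T) n * exp (- phi \<delta> (enat T) * real n))"
      "QT (enat T) (phi \<delta> (enat T)) = exp (- \<delta>)" .
  qed
qed

text \<open>phi(delta,T) -> phi(delta,infinity): the lower bound comes from partial sums (which
  agree for large T), the upper bound from Q_T(mu) -> Q_inf(mu) (Tannery's theorem).\<close>

lemma phi_lower_unif:
  assumes "0 < \<delta>" "0 < l" "l < phi \<delta> \<infinity>"
  shows "\<exists>K. \<forall>T>K. l < phi \<delta> (enat T)"
proof -
  obtain K0 a where "0 < a" "exp (- \<delta>) < (\<Sum>n\<le>K0. qT \<infinity> n * exp (- a * real n))"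
    using phi_witness[OF assms(1)] .
  then obtain n0 where n0: "0 < n0" "0 < qT \<infinity> n0"
    using qT_pos_exists[where K=K0 and T=\<infinity>] exp_gt_zero[of "- \<delta>"] by (meson order.strict_trans)
  have sl: "summable (\<lambda>n. qT \<infinity> n * exp (- l * real n))" using laplace_summable[OF assms(2)] .
  have "exp (- \<delta>) < QT \<infinity> l"
    using QT_strict_antimono[OF sl assms(3) n0(2,1)] phi_inf[OF assms(1)] by simp
  moreover have "(\<lambda>K. \<Sum>n\<le>K. qT \<infinity> n * exp (- l * real n)) \<longlonglongrightarrow> QT \<infinity> l"
    unfolding QT_def by (rule summable_LIMSEQ'[OF sl])
  ultimately have "eventually (\<lambda>K. exp (- \<delta>) < (\<Sum>n\<le>K. qT \<infinity> n * exp (- l * real n)))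
                      sequentially"
    by (rule order_tendstoD(1)[rotated])
  then obtain K where K: "exp (- \<delta>) < (\<Sum>n\<le>K. qT \<infinity> n * exp (- l * real n))"
    by (auto simp: eventually_sequentially)
  have "l < phi \<delta> (enat T)" if "K < T" for T
    using phi_char(3)[OF assms(1,2), of "enat T" K] K partial_fin[OF that] by simp
  then show ?thesis by blast
qed

lemma QT_conv:
  assumes "0 < mu" shows "(\<lambda>T. QT (enat T) mu) \<longlonglongrightarrow> QT \<infinity> mu"
  unfolding QT_def
proof (rule tannerys_theorem[THEN conjunct2, THEN conjunct2])
  show "((\<lambda>T. qT (enat T) k * exp (- mu * real k)) \<longlongrightarrow> qT \<infinity> k * exp (- mu * real k)) sequentially"
    for k
  proof (rule tendsto_eventually)
    show "eventually (\<lambda>T. qT (enat T) k * exp (- mu * real k) = qT \<infinity> k * exp (- mu * real k))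
            sequentially"
      using eventually_gt_at_top[of k] by eventually_elim (simp add: qT_fin)
  qed
  show "eventually (\<lambda>(k, T). norm (qT (enat T) k * exp (- mu * real k)) \<le> exp (- mu) ^ k)
          (at_top \<times>\<^sub>F sequentially)"
    by (rule always_eventually) (use qT_exp_le_geometric in \<open>auto simp: qT_nonneg\<close>)
  show "summable (\<lambda>k. exp (- mu) ^ k)" using assms by (intro summable_geometric) simp
qed simp

lemma phi_upper_unif:
  assumes "0 < \<delta>" "phi \<delta> \<infinity> < mu"
  shows "\<exists>K. \<forall>T>K. phi \<delta> (enat T) < mu"
proof -
  have mu0: "0 < mu" using phi_inf(3)[OF assms(1)] assms(2) by simp
  obtain K a where a: "0 < a" and K: "exp (- \<delta>) < (\<Sum>n\<le>K. qT \<infinity> n * exp (- a * real n))"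
    using phi_witness[OF assms(1)] .
  then obtain n0 where n0: "0 < n0" "0 < qT \<infinity> n0"
    using qT_pos_exists[where K=K and T=\<infinity>] exp_gt_zero[of "- \<delta>"] by (meson order.strict_trans)
  have "QT \<infinity> mu < exp (- \<delta>)"
    using QT_strict_antimono[OF phi_inf(1)[OF assms(1)] assms(2) n0(2,1)] phi_inf[OF assms(1)]
    by simp
  from order_tendstoD(2)[OF QT_conv[OF mu0] this]
  obtain K1 where K1: "\<And>T. K1 \<le> T \<Longrightarrow> QT (enat T) mu < exp (- \<delta>)"
    by (auto simp: eventually_sequentially)
  have "phi \<delta> (enat T) < mu" if "max K K1 < T" for T
    using phi_less[OF assms(1) a _ mu0 K1[of T], of K] K partial_fin[of K T] that by simp
  then show ?thesis by blast
qed

lemma phi_conv: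
  assumes "0 < \<delta>" shows "(\<lambda>T. phi \<delta> (enat T)) \<longlonglongrightarrow> phi \<delta> \<infinity>"
proof (rule order_tendstoI)
  fix y assume y: "y < phi \<delta> \<infinity>"
  define l where "l = max y (phi \<delta> \<infinity> / 2)"
  have l: "0 < l" "l < phi \<delta> \<infinity>" using y phi_inf(3)[OF assms] by (auto simp: l_def)
  obtain K where "\<forall>T>K. l < phi \<delta> (enat T)" using phi_lower_unif[OF assms l] by blast
  then show "eventually (\<lambda>T. y < phi \<delta> (enat T)) sequentially"
    unfolding eventually_sequentially by (intro exI[of _ "Suc K"]) (auto simp: l_def)
next
  fix y assume "phi \<delta> \<infinity> < y"
  then obtain K where "\<forall>T>K. phi \<delta> (enat T) < y" using phi_upper_unif[OF assms] by blast
  then show "eventually (\<lambda>T. phi \<delta> (enat T) < y) sequentially"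
    unfolding eventually_sequentially by (intro exI[of _ "Suc K"]) auto
qed

section \<open>Moments of the increment law, uniformly in T\<close>

definition pT :: "real \<Rightarrow> enat \<Rightarrow> nat \<Rightarrow> real" where
  "pT \<delta> T n = exp \<delta> * qT T n * exp (- phi \<delta> T * real n)"

definition xi_mean :: "real \<Rightarrow> enat \<Rightarrow> real" where
  "xi_mean \<delta> T = (\<Sum>n. real n * pT \<delta> T n)"

definition xi_moment2 :: "real \<Rightarrow> enat \<Rightarrow> real" where
  "xi_moment2 \<delta> T = (\<Sum>n. real n ^ 2 * pT \<delta> T n)"

lemma xi_law_eq: "xi_law \<delta> T = density (count_space UNIV) (\<lambda>n. ennreal (pT \<delta> T n))"
  unfolding xi_law_def pT_def ..

lemma pT_nonneg: "0 \<le> pT \<delta> T n"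
  by (simp add: pT_def qT_nonneg)

lemma pT_le:
  assumes "c \<le> phi \<delta> T" shows "pT \<delta> T n \<le> exp \<delta> * exp (- c * real n)"
proof -
  have "qT T n * exp (- phi \<delta> T * real n) \<le> 1 * exp (- c * real n)"
    using assms qT_le1[of T n] by (intro mult_mono) (auto simp: mult_right_mono)
  then show ?thesis unfolding pT_def by (simp add: mult.assoc)
qed

lemma sq_exp_bound:
  assumes "0 < c" shows "real n ^ 2 * exp (- c * real n) \<le> 64 / c^2 * exp (- c / 2) ^ n"
proof -
  define y where "y = c * real n / 4"
  have "y / 2 \<le> exp (y / 2)" using exp_ge_add_one_self[of "y/2"] by linarith
  then have "(y / 2)^2 \<le> exp (y / 2) ^ 2" using assms by (intro power_mono) (auto simp: y_def)
  also have "\<dots> = exp y" by (simp flip: exp_of_nat_mult)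
  finally have n_sq: "real n ^ 2 \<le> 64 / c^2 * exp (c * real n / 4)"
    using assms by (simp add: y_def field_simps power2_eq_square)
  then have "real n ^ 2 * exp (- c * real n) \<le> 64 / c^2 * (exp (c * real n / 4) * exp (- c * real n))"
    using mult_right_mono[OF n_sq, of "exp (- c * real n)"] by (simp add: mult.assoc)
  also have "exp (c * real n / 4) * exp (- c * real n) = exp (- (3 * c / 4) * real n)"
    by (subst mult_exp_exp) (simp add: algebra_simps)
  also have "\<dots> = exp (- (3 * c / 4)) ^ n" by (rule exp_pow)
  also have "64 / c^2 * exp (- (3 * c / 4)) ^ n \<le> 64 / c^2 * exp (- c / 2) ^ n"
    using assms by (intro mult_left_mono power_mono) auto
  finally show ?thesis .
qed

lemma summable_sq_exp:
  assumes "0 < c" shows "summable (\<lambda>n. real n ^ 2 * exp (- c * real n))"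
proof (rule summable_comparison_test[OF _ summable_mult[OF summable_geometric[of "exp (- c / 2)"]]])
  show "\<exists>N. \<forall>n\<ge>N. norm (real n ^ 2 * exp (- c * real n)) \<le> 64 / c^2 * exp (- c / 2) ^ n"
    using sq_exp_bound[OF assms] by auto
qed (use assms in simp)

lemma summable_n_exp:
  assumes "0 < c" shows "summable (\<lambda>n. real n * exp (- c * real n))"
proof (rule summable_comparison_test[OF _ summable_sq_exp[OF assms]])
  have "real n \<le> real n ^ 2" for n by (cases n) (auto simp: power2_eq_square)
  then show "\<exists>N. \<forall>n\<ge>N. norm (real n * exp (- c * real n)) \<le> real n ^ 2 * exp (- c * real n)"
    by (auto intro!: mult_right_mono)
qed

lemma moment2_bound:
  assumes "0 < c" "c \<le> phi \<delta> T"
  shows "summable (\<lambda>n. real n ^ 2 * pT \<delta> T n)"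
    "xi_moment2 \<delta> T \<le> exp \<delta> * (\<Sum>n. real n ^ 2 * exp (- c * real n))"
proof -
  have dom: "real n ^ 2 * pT \<delta> T n \<le> exp \<delta> * (real n ^ 2 * exp (- c * real n))" for n
    using mult_left_mono[OF pT_le[OF assms(2), of n], of "real n ^ 2"] by (simp add: algebra_simps)
  have s: "summable (\<lambda>n. exp \<delta> * (real n ^ 2 * exp (- c * real n)))"
    using summable_sq_exp[OF assms(1)] by (rule summable_mult)
  show sm: "summable (\<lambda>n. real n ^ 2 * pT \<delta> T n)"
    by (rule summable_comparison_test[OF _ s]) (use dom pT_nonneg in auto)
  have "xi_moment2 \<delta> T \<le> (\<Sum>n. exp \<delta> * (real n ^ 2 * exp (- c * real n)))"
    unfolding xi_moment2_def by (rule suminf_le[OF dom sm s])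
  also have "\<dots> = exp \<delta> * (\<Sum>n. real n ^ 2 * exp (- c * real n))"
    by (rule suminf_mult[OF summable_sq_exp[OF assms(1)]])
  finally show "xi_moment2 \<delta> T \<le> exp \<delta> * (\<Sum>n. real n ^ 2 * exp (- c * real n))" .
qed

text \<open>The means converge: pointwise convergence of the weights (qT is eventually
  constant, phi converges) with the uniform dominating sequence e^delta n e^{-c n}.\<close>

lemma mean_conv:
  assumes "0 < \<delta>" shows "(\<lambda>T. xi_mean \<delta> (enat T)) \<longlonglongrightarrow> xi_mean \<delta> \<infinity>"
  unfolding xi_mean_def
proof (rule tannerys_theorem[THEN conjunct2, THEN conjunct2])
  define c where "c = phi \<delta> \<infinity> / 2"
  have c: "0 < c" "c < phi \<delta> \<infinity>" using phi_inf(3)[OF assms] by (auto simp: c_def)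
  obtain K where K: "\<And>T. K < T \<Longrightarrow> c < phi \<delta> (enat T)" using phi_lower_unif[OF assms c] by blast
  show "((\<lambda>T. real k * pT \<delta> (enat T) k) \<longlongrightarrow> real k * pT \<delta> \<infinity> k) sequentially" for k
  proof (rule Lim_transform_eventually)
    show "((\<lambda>T. real k * (exp \<delta> * qT \<infinity> k * exp (- phi \<delta> (enat T) * real k)))
            \<longlongrightarrow> real k * pT \<delta> \<infinity> k) sequentially"
      unfolding pT_def by (intro tendsto_intros phi_conv[OF assms])
    show "eventually (\<lambda>T. real k * (exp \<delta> * qT \<infinity> k * exp (- phi \<delta> (enat T) * real k))
            = real k * pT \<delta> (enat T) k) sequentially"
      using eventually_gt_at_top[of k] by eventually_elim (simp add: qT_fin pT_def)
  qed
  show "eventually (\<lambda>(k, T). norm (real k * pT \<delta> (enat T) k) \<le> exp \<delta> * (real k * exp (- c * real k)))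
          (at_top \<times>\<^sub>F sequentially)"
    unfolding eventually_prod_filter
  proof (intro exI conjI allI impI)
    show "eventually (\<lambda>T. K < T) sequentially" by (rule eventually_gt_at_top)
    fix k T assume "K < T"
    then have "pT \<delta> (enat T) k \<le> exp \<delta> * exp (- c * real k)"
      using K by (intro pT_le) (simp add: less_imp_le)
    then have "real k * pT \<delta> (enat T) k \<le> real k * (exp \<delta> * exp (- c * real k))"
      by (rule mult_left_mono) simp
    then show "case (k, T) of (k, T) \<Rightarrow> norm (real k * pT \<delta> (enat T) k) \<le> exp \<delta> * (real k * exp (- c * real k))"
      by (simp add: abs_mult pT_nonneg algebra_simps)
  qed simp
  show "summable (\<lambda>k. exp \<delta> * (real k * exp (- c * real k)))"
    using summable_n_exp[OF c(1)] by (rule summable_mult)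
qed simp

section \<open>Chebyshev bounds for the renewal process at fixed T\<close>

text \<open>Setting for one period T: phi(delta,T) solves Q_T = e^{-delta}, so p_T is a
  probability on N, and its second moment is finite.\<close>

locale renewal_law =
  fixes \<delta> :: real and T :: enat
  assumes laplace_summable_phi: "summable (\<lambda>n. qT T n * exp (- phi \<delta> T * real n))"
    and laplace_phi: "QT T (phi \<delta> T) = exp (- \<delta>)"
    and summable_moment2: "summable (\<lambda>n. real n ^ 2 * pT \<delta> T n)"
begin

abbreviation "X \<equiv> xi_law \<delta> T"
abbreviation "P \<equiv> Pdt \<delta> T"

lemma summable_pT: "summable (pT \<delta> T)"
  unfolding pT_def using summable_mult[OF laplace_summable_phi, of "exp \<delta>"] by (simp add: mult.assoc)

lemma sum_pT: "(\<Sum>n. pT \<delta> T n) = 1"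
proof -
  have "(\<Sum>n. pT \<delta> T n) = exp \<delta> * QT T (phi \<delta> T)"
    unfolding pT_def QT_def using suminf_mult[OF laplace_summable_phi, of "exp \<delta>"]
    by (simp add: mult.assoc)
  then show ?thesis using laplace_phi by (simp add: exp_minus)
qed

lemma summable_moment1: "summable (\<lambda>n. real n * pT \<delta> T n)"
proof (rule summable_comparison_test[OF _ summable_moment2])
  have "real n \<le> real n ^ 2" for n by (cases n) (auto simp: power2_eq_square)
  then show "\<exists>N. \<forall>n\<ge>N. norm (real n * pT \<delta> T n) \<le> real n ^ 2 * pT \<delta> T n"
    by (auto simp: pT_nonneg intro!: mult_right_mono)
qed

lemma prob_space_X: "prob_space X"
proof
  have "emeasure X (space X) = (\<integral>\<^sup>+ n. ennreal (pT \<delta> T n) \<partial>count_space UNIV)"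
    unfolding xi_law_eq by (simp add: emeasure_density)
  also have "\<dots> = ennreal (\<Sum>n. pT \<delta> T n)"
    by (simp add: nn_integral_count_space_nat suminf_ennreal2 pT_nonneg summable_pT)
  finally show "emeasure X (space X) = 1" using sum_pT by simp
qed

lemma integral_X:
  assumes "summable (\<lambda>n. \<bar>g n\<bar> * pT \<delta> T n)"
  shows "integrable X g" "integral\<^sup>L X g = (\<Sum>n. g n * pT \<delta> T n)"
proof -
  have i: "integrable (count_space UNIV) (\<lambda>n. pT \<delta> T n *\<^sub>R g n)"
    using assms by (auto simp: integrable_count_space_nat_iff abs_mult pT_nonneg mult.commute)
  then show "integrable X g"
    unfolding xi_law_eq by (subst integrable_density) (auto simp: pT_nonneg)
  have "integral\<^sup>L X g = integral\<^sup>L (count_space UNIV) (\<lambda>n. pT \<delta> T n *\<^sub>R g n)"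
    unfolding xi_law_eq by (rule integral_density) (auto simp: pT_nonneg)
  also have "\<dots> = (\<Sum>n. pT \<delta> T n *\<^sub>R g n)" by (rule integral_count_space_nat[OF i])
  finally show "integral\<^sup>L X g = (\<Sum>n. g n * pT \<delta> T n)" by (simp add: mult.commute)
qed

lemma integral_X_id: "integrable X real" "integral\<^sup>L X real = xi_mean \<delta> T"
  using integral_X[of real] summable_moment1 by (auto simp: xi_mean_def)

lemma integral_X_sq:
  "integrable X (\<lambda>n. real n ^ 2)" "integral\<^sup>L X (\<lambda>n. real n ^ 2) = xi_moment2 \<delta> T"
  using integral_X[of "\<lambda>n. real n ^ 2"] summable_moment2 by (auto simp: xi_moment2_def)

text \<open>Since xi >= 1 almost surely, the mean is at least 1.\<close>

lemma xi_mean_ge1: "1 \<le> xi_mean \<delta> T"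
proof -
  have "pT \<delta> T n \<le> real n * pT \<delta> T n" for n
    using mult_right_mono[of 1 "real n" "pT \<delta> T n"] pT_nonneg[of \<delta> T n]
    by (cases "n = 0") (auto simp: pT_def)
  then have "(\<Sum>n. pT \<delta> T n) \<le> (\<Sum>n. real n * pT \<delta> T n)"
    by (rule suminf_le[OF _ summable_pT summable_moment1])
  then show ?thesis using sum_pT by (simp add: xi_mean_def)
qed

lemma xi_moment2_nonneg: "0 \<le> xi_moment2 \<delta> T"
  unfolding xi_moment2_def by (intro suminf_nonneg summable_moment2) (simp add: pT_nonneg)

interpretation PP: product_prob_space "\<lambda>_::nat. X" "UNIV::nat set"
  by (simp add: product_prob_space_def product_prob_space_axioms_def product_sigma_finite_def
      prob_space_X prob_space_imp_sigma_finite)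

lemma prob_space_P: "prob_space P"
  unfolding Pdt_def by (rule PP.P.prob_space_axioms)

interpretation PS: prob_space P by (rule prob_space_P)

lemma measurable_coord [measurable]: "(\<lambda>\<omega>. \<omega> i) \<in> measurable P X"
  unfolding Pdt_def by measurable

lemma borel_measurable_X [measurable]: "h \<in> borel_measurable X"
  unfolding xi_law_eq by simp

lemma distr_coord: "distr P X (\<lambda>\<omega>. \<omega> i) = X"
  unfolding Pdt_def by (rule PP.PiM_component) simp

lemma coord_integral:
  assumes "integrable X (h :: nat \<Rightarrow> real)"
  shows "integrable P (\<lambda>\<omega>. h (\<omega> i))" "integral\<^sup>L P (\<lambda>\<omega>. h (\<omega> i)) = integral\<^sup>L X h"
  using assms
  by (subst integrable_distr_eq[symmetric, of _ _ X] integral_distr[symmetric, of _ _ X];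
      simp add: distr_coord)+

lemma indep_coords: "PS.indep_vars (\<lambda>_. X) (\<lambda>i \<omega>. \<omega> i) UNIV"
proof (subst PS.indep_vars_iff_distr_eq_PiM)
  have "(\<lambda>x::nat\<Rightarrow>nat. restrict x UNIV) = (\<lambda>x. x)" by (auto simp: restrict_def fun_eq_iff)
  then show "distr P (Pi\<^sub>M UNIV (\<lambda>_. X)) (\<lambda>x. \<lambda>i\<in>UNIV. x i) = Pi\<^sub>M UNIV (\<lambda>i. distr P X (\<lambda>\<omega>. \<omega> i))"
    unfolding distr_coord by (simp add: Pdt_def)
qed auto

abbreviation "Y i \<omega> \<equiv> real (\<omega> i) - xi_mean \<delta> T"

lemma Y_moments:
  "integrable P (Y i)" "integral\<^sup>L P (Y i) = 0"
  "integrable P (\<lambda>\<omega>. (Y i \<omega>)^2)" "integral\<^sup>L P (\<lambda>\<omega>. (Y i \<omega>)^2) = xi_moment2 \<delta> T - (xi_mean \<delta> T)^2"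
proof -
  let ?m = "xi_mean \<delta> T"
  have sq: "(\<lambda>n. (real n - ?m)^2) = (\<lambda>n. real n ^ 2 - 2 * ?m * real n + ?m^2)"
    by (auto simp: power2_diff fun_eq_iff algebra_simps)
  have iX: "integrable X (\<lambda>n. real n - ?m)" "integrable X (\<lambda>n. (real n - ?m)^2)"
    using integral_X_id(1) integral_X_sq(1) unfolding sq by simp_all
  have "integral\<^sup>L X (\<lambda>n. real n - ?m) = 0"
    using integral_X_id prob_space.prob_space[OF prob_space_X] by simp
  moreover have "integral\<^sup>L X (\<lambda>n. (real n - ?m)^2) = xi_moment2 \<delta> T - ?m^2"
    using integral_X_id integral_X_sq prob_space.prob_space[OF prob_space_X]
    unfolding sq by (simp add: power2_eq_square)
  ultimately show "integrable P (Y i)" "integral\<^sup>L P (Y i) = 0"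
    "integrable P (\<lambda>\<omega>. (Y i \<omega>)^2)" "integral\<^sup>L P (\<lambda>\<omega>. (Y i \<omega>)^2) = xi_moment2 \<delta> T - ?m^2"
    using coord_integral[OF iX(1), of i] coord_integral[OF iX(2), of i] by auto
qed

lemma Y_products:
  "integrable P (\<lambda>\<omega>. Y i \<omega> * Y k \<omega>)"
  "i \<noteq> k \<Longrightarrow> integral\<^sup>L P (\<lambda>\<omega>. Y i \<omega> * Y k \<omega>) = 0"
proof -
  have indep: "PS.indep_vars (\<lambda>_. borel) (\<lambda>i \<omega>. Y i \<omega>) {i, k}"
    by (rule PS.indep_vars_subset[OF PS.indep_vars_compose2[OF indep_coords]]) auto
  show "integrable P (\<lambda>\<omega>. Y i \<omega> * Y k \<omega>)"
  proof (cases "i = k")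
    case True then show ?thesis using Y_moments(3)[of i] by (simp add: power2_eq_square)
  next
    case False
    then show ?thesis
      using PS.indep_vars_integrable[OF _ indep] Y_moments(1) by auto
  qed
  assume "i \<noteq> k"
  then show "integral\<^sup>L P (\<lambda>\<omega>. Y i \<omega> * Y k \<omega>) = 0"
    using PS.indep_vars_lebesgue_integral[OF _ indep] Y_moments(1,2) by auto
qed

text \<open>Var(tau_j) = j (V - m^2) <= j V, by orthogonality of the Y_i.\<close>

lemma tau_centred_sq:
  "integrable P (\<lambda>\<omega>. (\<Sum>i<j. Y i \<omega>)^2)"
  "integral\<^sup>L P (\<lambda>\<omega>. (\<Sum>i<j. Y i \<omega>)^2) = real j * (xi_moment2 \<delta> T - (xi_mean \<delta> T)^2)"
proof -
  have sq: "(\<lambda>\<omega>. (\<Sum>i<j. Y i \<omega>)^2) = (\<lambda>\<omega>. \<Sum>i<j. \<Sum>k<j. Y i \<omega> * Y k \<omega>)"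
    by (simp add: power2_eq_square sum_product)
  show "integrable P (\<lambda>\<omega>. (\<Sum>i<j. Y i \<omega>)^2)" unfolding sq
    by (intro Bochner_Integration.integrable_sum Y_products(1))
  have "integral\<^sup>L P (\<lambda>\<omega>. \<Sum>i<j. \<Sum>k<j. Y i \<omega> * Y k \<omega>)
        = (\<Sum>i<j. \<Sum>k<j. integral\<^sup>L P (\<lambda>\<omega>. Y i \<omega> * Y k \<omega>))"
    by (simp add: Bochner_Integration.integral_sum Bochner_Integration.integrable_sum Y_products(1))
  also have "\<dots> = (\<Sum>i<j. \<Sum>k<j. if k = i then xi_moment2 \<delta> T - (xi_mean \<delta> T)^2 else 0)"
    using Y_products(2) Y_moments(4) by (intro sum.cong refl) (auto simp: power2_eq_square)
  finally show "integral\<^sup>L P (\<lambda>\<omega>. (\<Sum>i<j. Y i \<omega>)^2) = real j * (xi_moment2 \<delta> T - (xi_mean \<delta> T)^2)"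
    unfolding sq by simp
qed

lemma tau_measurable [measurable]: "(\<lambda>\<omega>. real (tau \<omega> j)) \<in> borel_measurable P"
  unfolding tau_def of_nat_sum by measurable

lemma chebyshev_tau:
  assumes "0 < a" "xi_moment2 \<delta> T \<le> C"
  shows "measure P {\<omega> \<in> space P. a \<le> \<bar>real (tau \<omega> j) - real j * xi_mean \<delta> T\<bar>}
           \<le> real j * C / a^2"
proof -
  have centred: "real (tau \<omega> j) - real j * xi_mean \<delta> T = (\<Sum>i<j. Y i \<omega>)" for \<omega>
    by (simp add: tau_def sum_subtractf)
  have "measure P {\<omega> \<in> space P. a \<le> \<bar>\<Sum>i<j. Y i \<omega>\<bar>}
        \<le> integral\<^sup>L P (\<lambda>\<omega>. (\<Sum>i<j. Y i \<omega>)^2) / a^2"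
    by (rule PS.second_moment_method) (use tau_centred_sq(1) assms in auto)
  also have "\<dots> \<le> real j * C / a^2"
  proof -
    have "xi_moment2 \<delta> T - (xi_mean \<delta> T)^2 \<le> C"
      using assms(2) zero_le_power2[of "xi_mean \<delta> T"] by linarith
    then show ?thesis unfolding tau_centred_sq(2) by (intro divide_right_mono mult_left_mono) auto
  qed
  finally show ?thesis unfolding centred .
qed

end
section \<open>Deviations of the renewal counting process\<close>

lemma tau_mono: "i \<le> k \<Longrightarrow> tau \<omega> i \<le> tau \<omega> k"
  unfolding tau_def by (intro sum_mono2) auto

lemma LN_deviation_cases:
  fixes r s \<epsilon> :: real
  assumes dev: "\<epsilon> < \<bar>real (LN N \<omega>) / real N - s\<bar>" and close: "\<bar>r - s\<bar> < \<epsilon> / 2" and N: "0 < N"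
  shows "tau \<omega> (nat \<lceil>real N * (r + \<epsilon> / 2)\<rceil>) \<le> N \<or>
         (0 < real N * (r - \<epsilon> / 2) \<and> N < tau \<omega> (nat \<lfloor>real N * (r - \<epsilon> / 2)\<rfloor> + 1))"
    (is "tau \<omega> ?j1 \<le> N \<or> (0 < ?x2 \<and> N < tau \<omega> ?j2)")
proof (cases "finite {j. tau \<omega> j \<le> N}")
  case False
  then obtain k where "tau \<omega> k \<le> N" "?j1 \<le> k"
    using infinite_nat_iff_unbounded_le by (metis mem_Collect_eq)
  then show ?thesis using tau_mono[of ?j1 k \<omega>] by linarith
next
  case True
  define L where "L = LN N \<omega>"
  have "0 \<in> {j. tau \<omega> j \<le> N}" by (simp add: tau_def)
  then have L_in: "tau \<omega> L \<le> N" and Suc_L_out: "\<not> tau \<omega> (Suc L) \<le> N"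
    using Max_in[OF True] Max_ge[OF True, of "Suc L"] unfolding L_def LN_def by auto
  have "r + \<epsilon> / 2 < real L / real N \<or> real L / real N < r - \<epsilon> / 2"
    using dev close unfolding L_def by linarith
  then have "real N * (r + \<epsilon> / 2) < real L \<or> real L < ?x2"
    using N by (simp add: field_simps)
  then show ?thesis
  proof
    assume "real N * (r + \<epsilon> / 2) < real L"
    then have "?j1 \<le> L" by linarith
    then show ?thesis using tau_mono[of ?j1 L \<omega>] L_in by simp
  next
    assume "real L < ?x2"
    then have "Suc L \<le> ?j2" "0 < ?x2" by linarith+
    then show ?thesis using tau_mono[of "Suc L" ?j2 \<omega>] Suc_L_out by simp
  qed
qed

lemma deviation_indices:
  fixes m n \<epsilon> :: real
  assumes m: "1 \<le> m" and n: "0 < n" and e: "0 < \<epsilon>" and ne: "4 \<le> n * \<epsilon>"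
  defines "j1 \<equiv> nat \<lceil>n * (1 / m + \<epsilon> / 2)\<rceil>" and "j2 \<equiv> nat \<lfloor>n * (1 / m - \<epsilon> / 2)\<rfloor> + 1"
  shows "n + n * \<epsilon> / 4 \<le> real j1 * m"
    and "0 < n * (1 / m - \<epsilon> / 2) \<Longrightarrow> real j2 * m \<le> n - n * \<epsilon> / 4"
    and "real j1 \<le> n * (1 + \<epsilon>) + 1" "real j2 \<le> n * (1 + \<epsilon>) + 1"
proof -
  have inv_m: "0 < 1 / m" "1 / m \<le> 1" using m by auto
  have n_inv_m: "n * (1 / m) \<le> n" using inv_m n mult_left_mono[of "1/m" 1 n] by simp
  have expand: "n * (1 + \<epsilon>) = n + n * \<epsilon>" "n * (1 / m + \<epsilon> / 2) = n * (1 / m) + n * \<epsilon> / 2"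
    "n * (1 / m - \<epsilon> / 2) = n * (1 / m) - n * \<epsilon> / 2" by (simp_all add: ring_distribs)
  have ne_pos: "0 < n * \<epsilon>" using n e by simp
  have "0 \<le> n * (1 / m + \<epsilon> / 2)" using n inv_m e by simp
  then have j1_ge: "n * (1 / m + \<epsilon> / 2) \<le> real j1" and j1_le: "real j1 \<le> n * (1 / m + \<epsilon> / 2) + 1"
    unfolding j1_def by linarith+
  have "n + n * \<epsilon> / 4 \<le> n + n * m * \<epsilon> / 2" using m n e by (simp add: mult_left_mono)
  also have "\<dots> = n * (1 / m + \<epsilon> / 2) * m" using m by (simp add: field_simps)
  also have "\<dots> \<le> real j1 * m" using j1_ge m by (intro mult_right_mono) auto
  finally show "n + n * \<epsilon> / 4 \<le> real j1 * m" .
  show "real j1 \<le> n * (1 + \<epsilon>) + 1" using j1_le n_inv_m ne_pos unfolding expand by linarith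
  show "real j2 \<le> n * (1 + \<epsilon>) + 1"
  proof (cases "0 \<le> n * (1 / m - \<epsilon> / 2)")
    case True
    then have "real j2 \<le> n * (1 / m - \<epsilon> / 2) + 1" unfolding j2_def by linarith
    then show ?thesis using n_inv_m ne_pos unfolding expand by linarith
  qed (use n e in \<open>simp add: j2_def\<close>)
  assume pos: "0 < n * (1 / m - \<epsilon> / 2)"
  then have "real j2 \<le> n * (1 / m - \<epsilon> / 2) + 1" unfolding j2_def by linarith
  then have "real j2 * m \<le> (n * (1 / m - \<epsilon> / 2) + 1) * m" using m by (intro mult_right_mono) auto
  also have "\<dots> = n - m * (n * \<epsilon> / 2 - 1)" using m by (simp add: field_simps)
  also have "\<dots> \<le> n - (n * \<epsilon> / 2 - 1)"
  proof -
    have "0 \<le> n * \<epsilon> / 2 - 1" using ne by simp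
    from mult_right_mono[OF m this] show ?thesis by simp
  qed
  also have "\<dots> \<le> n - n * \<epsilon> / 4" using ne by simp
  finally show "real j2 * m \<le> n - n * \<epsilon> / 4" .
qed

context renewal_law
begin

interpretation PS: prob_space P by (rule prob_space_P)

lemma LN_deviation_subset:
  assumes e: "0 < \<epsilon>" and close: "\<bar>1 / xi_mean \<delta> T - s\<bar> < \<epsilon> / 2" and Ne: "4 \<le> real N * \<epsilon>"
  defines "D j \<equiv> {\<omega> \<in> space P. real N * \<epsilon> / 4 \<le> \<bar>real (tau \<omega> j) - real j * xi_mean \<delta> T\<bar>}"
  shows "{\<omega> \<in> space P. \<epsilon> < \<bar>real (LN N \<omega>) / real N - s\<bar>}
           \<subseteq> D (nat \<lceil>real N * (1 / xi_mean \<delta> T + \<epsilon> / 2)\<rceil>)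
             \<union> D (nat \<lfloor>real N * (1 / xi_mean \<delta> T - \<epsilon> / 2)\<rfloor> + 1)"
    (is "_ \<subseteq> D ?j1 \<union> D ?j2")
proof clarify
  let ?m = "xi_mean \<delta> T" and ?n = "real N"
  have N: "0 < N" using Ne e by (cases N) auto
  then have n: "0 < ?n" by simp
  note idx = deviation_indices[OF xi_mean_ge1 n e Ne]
  fix \<omega> assume \<omega>: "\<omega> \<in> space P" "\<epsilon> < \<bar>real (LN N \<omega>) / real N - s\<bar>" "\<omega> \<notin> D ?j2"
  from LN_deviation_cases[OF \<omega>(2) close N]
  consider "tau \<omega> ?j1 \<le> N" | "0 < ?n * (1 / ?m - \<epsilon> / 2)" "N < tau \<omega> ?j2" by blast
  then show "\<omega> \<in> D ?j1"
  proof cases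
    case 1
    then have "real (tau \<omega> ?j1) \<le> ?n" by simp
    then have "?n * \<epsilon> / 4 \<le> real ?j1 * ?m - real (tau \<omega> ?j1)" using idx(1) by linarith
    then have "?n * \<epsilon> / 4 \<le> \<bar>real ?j1 * ?m - real (tau \<omega> ?j1)\<bar>" by (rule order_trans[OF _ abs_ge_self])
    then show ?thesis using \<omega>(1) unfolding D_def by (simp add: abs_minus_commute)
  next
    case 2
    then have "?n < real (tau \<omega> ?j2)" by simp
    then have "?n * \<epsilon> / 4 \<le> real (tau \<omega> ?j2) - real ?j2 * ?m" using idx(2)[OF 2(1)] by linarith
    then have "?n * \<epsilon> / 4 \<le> \<bar>real (tau \<omega> ?j2) - real ?j2 * ?m\<bar>" by (rule order_trans[OF _ abs_ge_self])
    then show ?thesis using \<omega>(1,3) unfolding D_def by simp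
  qed
qed

lemma LN_deviation_bound:
  assumes e: "0 < \<epsilon>" and close: "\<bar>1 / xi_mean \<delta> T - s\<bar> < \<epsilon> / 2"
    and Ne: "4 \<le> real N * \<epsilon>" and V: "xi_moment2 \<delta> T \<le> C"
  shows "measure P {\<omega> \<in> space P. \<epsilon> < \<bar>real (LN N \<omega>) / real N - s\<bar>}
           \<le> 2 * (real N * (1 + \<epsilon>) + 1) * C / (real N * \<epsilon> / 4)^2"
proof -
  let ?m = "xi_mean \<delta> T" and ?n = "real N"
  define a where "a = ?n * \<epsilon> / 4"
  define D where "D j = {\<omega> \<in> space P. a \<le> \<bar>real (tau \<omega> j) - real j * ?m\<bar>}" for j
  define j1 where "j1 = nat \<lceil>?n * (1 / ?m + \<epsilon> / 2)\<rceil>"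
  define j2 where "j2 = nat \<lfloor>?n * (1 / ?m - \<epsilon> / 2)\<rfloor> + 1"
  have n: "0 < ?n" using Ne e by (cases N) auto
  have a: "0 < a" using n e by (simp add: a_def)
  have C: "0 \<le> C" using V xi_moment2_nonneg by linarith
  have D_sets: "D j \<in> sets P" for j unfolding D_def by measurable
  have "measure P {\<omega> \<in> space P. \<epsilon> < \<bar>real (LN N \<omega>) / real N - s\<bar>} \<le> measure P (D j1 \<union> D j2)"
    using LN_deviation_subset[OF e close Ne] D_sets
    unfolding D_def a_def j1_def j2_def by (intro PS.finite_measure_mono) auto
  also have "\<dots> \<le> measure P (D j1) + measure P (D j2)"
    by (intro measure_Un_le D_sets)
  also have "\<dots> \<le> real j1 * C / a^2 + real j2 * C / a^2"
    using chebyshev_tau[OF a V, of j1] chebyshev_tau[OF a V, of j2] unfolding D_def by (rule add_mono)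
  also have "\<dots> \<le> 2 * (?n * (1 + \<epsilon>) + 1) * C / a^2"
  proof -
    have "real j1 * C + real j2 * C \<le> 2 * (?n * (1 + \<epsilon>) + 1) * C"
      using mult_right_mono[OF deviation_indices(3)[OF xi_mean_ge1 n e Ne] C]
        mult_right_mono[OF deviation_indices(4)[OF xi_mean_ge1 n e Ne] C]
      unfolding j1_def j2_def by linarith
    then show ?thesis by (simp add: add_divide_distrib[symmetric] divide_right_mono)
  qed
  finally show ?thesis by (simp add: a_def)
qed

end

section \<open>Uniformity in T and the theorem\<close>

lemma renewal_law_of_phi:
  assumes "0 < c" "c \<le> phi \<delta> T"
    and "summable (\<lambda>n. qT T n * exp (- phi \<delta> T * real n))" "QT T (phi \<delta> T) = exp (- \<delta>)"
  shows "renewal_law \<delta> T"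
  using assms moment2_bound(1)[OF assms(1,2)] by (intro renewal_law.intro)

lemma s_inf_eq:
  assumes "0 < \<delta>" shows "renewal_law \<delta> \<infinity>" "s_inf \<delta> = 1 / xi_mean \<delta> \<infinity>"
proof -
  show law: "renewal_law \<delta> \<infinity>"
    using renewal_law_of_phi[OF phi_inf(3)[OF assms] order.refl phi_inf(1,2)[OF assms]] .
  show "s_inf \<delta> = 1 / xi_mean \<delta> \<infinity>"
    unfolding s_inf_def using renewal_law.integral_X_id(2)[OF law] by simp
qed

lemma uniform_renewal_laws:
  assumes d: "0 < \<delta>" and "0 < \<eta>"
  obtains K C where "\<And>T. K < T \<Longrightarrow> renewal_law \<delta> (enat T)"
    "\<And>T. K < T \<Longrightarrow> xi_moment2 \<delta> (enat T) \<le> C"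
    "\<And>T. K < T \<Longrightarrow> \<bar>1 / xi_mean \<delta> (enat T) - s_inf \<delta>\<bar> < \<eta>"
proof -
  define c where "c = phi \<delta> \<infinity> / 2"
  have c: "0 < c" "c < phi \<delta> \<infinity>" using phi_inf(3)[OF d] by (auto simp: c_def)
  obtain K1 where K1: "\<And>T. K1 < T \<Longrightarrow> summable (\<lambda>n. qT (enat T) n * exp (- phi \<delta> (enat T) * real n))"
    "\<And>T. K1 < T \<Longrightarrow> QT (enat T) (phi \<delta> (enat T)) = exp (- \<delta>)"
    using phi_fin[OF d] by metis
  obtain K2 where K2: "\<And>T. K2 < T \<Longrightarrow> c < phi \<delta> (enat T)"
    using phi_lower_unif[OF d c] by blast
  have "1 \<le> xi_mean \<delta> \<infinity>" using renewal_law.xi_mean_ge1[OF s_inf_eq(1)[OF d]] .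
  then have "(\<lambda>T. 1 / xi_mean \<delta> (enat T)) \<longlonglongrightarrow> s_inf \<delta>"
    unfolding s_inf_eq(2)[OF d] by (intro tendsto_divide tendsto_const mean_conv[OF d]) auto
  then obtain K3 where K3: "\<And>T. K3 \<le> T \<Longrightarrow> \<bar>1 / xi_mean \<delta> (enat T) - s_inf \<delta>\<bar> < \<eta>"
    using \<open>0 < \<eta>\<close> unfolding LIMSEQ_iff by (metis real_norm_def)
  show ?thesis
  proof (rule that[of "K1 + K2 + K3" "exp \<delta> * (\<Sum>n. real n ^ 2 * exp (- c * real n))"])
    fix T assume T: "K1 + K2 + K3 < T"
    then have cT: "c \<le> phi \<delta> (enat T)" using K2[of T] by simp
    show "renewal_law \<delta> (enat T)" using renewal_law_of_phi[OF c(1) cT K1(1,2)] T by simp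
    show "xi_moment2 \<delta> (enat T) \<le> exp \<delta> * (\<Sum>n. real n ^ 2 * exp (- c * real n))"
      using moment2_bound(2)[OF c(1) cT] .
    show "\<bar>1 / xi_mean \<delta> (enat T) - s_inf \<delta>\<bar> < \<eta>" using K3[of T] T by simp
  qed
qed

lemma SUP_tendsto_zero:
  fixes f :: "'a \<Rightarrow> nat \<Rightarrow> real"
  assumes "S \<noteq> {}" "\<And>T N. T \<in> S \<Longrightarrow> 0 \<le> f T N"
    and "eventually (\<lambda>N. \<forall>T\<in>S. f T N \<le> B N) sequentially" "B \<longlonglongrightarrow> 0"
  shows "(\<lambda>N. SUP T\<in>S. f T N) \<longlonglongrightarrow> 0"
proof (rule tendsto_sandwich[of "\<lambda>_. 0" _ sequentially B])
  obtain T0 where T0: "T0 \<in> S" using assms(1) by blast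
  show "eventually (\<lambda>N. (SUP T\<in>S. f T N) \<le> B N) sequentially"
    using assms(3) by eventually_elim (use assms(1) in \<open>auto intro: cSUP_least\<close>)
  show "eventually (\<lambda>N. 0 \<le> (SUP T\<in>S. f T N)) sequentially"
    using assms(3)
  proof eventually_elim
    case (elim N)
    then have "bdd_above ((\<lambda>T. f T N) ` S)" by (intro bdd_aboveI[of _ "B N"]) auto
    then show ?case using assms(2)[OF T0] by (rule cSUP_upper2[OF _ T0])
  qed
qed (use assms(4) in auto)

lemma deviation_bound_tendsto_zero:
  fixes \<epsilon> C :: real
  assumes "0 < \<epsilon>"
  shows "(\<lambda>N. 2 * (real N * (1 + \<epsilon>) + 1) * C / (real N * \<epsilon> / 4)^2) \<longlonglongrightarrow> 0"
proof -
  have "eventually (\<lambda>N. 32 * (1 + \<epsilon>) * C / \<epsilon>^2 * (1 / real N) + 32 * C / \<epsilon>^2 * (1 / real N)^2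
      = 2 * (real N * (1 + \<epsilon>) + 1) * C / (real N * \<epsilon> / 4)^2) sequentially"
    using eventually_gt_at_top[of "0::nat"]
    by eventually_elim (use assms in \<open>simp add: field_simps power2_eq_square\<close>)
  moreover have "(\<lambda>N. 32 * (1 + \<epsilon>) * C / \<epsilon>^2 * (1 / real N) + 32 * C / \<epsilon>^2 * (1 / real N)^2)
                  \<longlonglongrightarrow> 32 * (1 + \<epsilon>) * C / \<epsilon>^2 * 0 + 32 * C / \<epsilon>^2 * 0^2"
    by (intro tendsto_intros lim_inverse_n')
  ultimately show ?thesis by (simp add: Lim_transform_eventually)
qed

lemma uniform_deviation_bound:
  fixes \<delta> \<epsilon> :: real
  assumes "0 < \<delta>" "0 < \<epsilon>"
  obtains K C where "eventually (\<lambda>N. \<forall>T>K. measure (Pdt \<delta> (enat T))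
      {\<omega> \<in> space (Pdt \<delta> (enat T)). \<bar>real (LN N \<omega>) / real N - s_inf \<delta>\<bar> > \<epsilon>}
      \<le> 2 * (real N * (1 + \<epsilon>) + 1) * C / (real N * \<epsilon> / 4)^2) sequentially"
proof -
  obtain K C where law: "\<And>T. K < T \<Longrightarrow> renewal_law \<delta> (enat T)"
    and V: "\<And>T. K < T \<Longrightarrow> xi_moment2 \<delta> (enat T) \<le> C"
    and close: "\<And>T. K < T \<Longrightarrow> \<bar>1 / xi_mean \<delta> (enat T) - s_inf \<delta>\<bar> < \<epsilon> / 2"
    using uniform_renewal_laws[OF assms(1), of "\<epsilon> / 2"] assms(2) by auto
  have "eventually (\<lambda>N. 4 \<le> real N * \<epsilon>) sequentially"
    using eventually_ge_at_top[of "nat \<lceil>4 / \<epsilon>\<rceil>"]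
    by eventually_elim (use assms(2) in \<open>simp add: divide_le_eq\<close>)
  then show ?thesis
    using renewal_law.LN_deviation_bound[OF law assms(2) close _ V]
    by (intro that[of K C]) (auto elim: eventually_mono)
qed

theorem lemma8:
  fixes \<delta> \<epsilon> :: real
  assumes "\<delta> > 0" and "\<epsilon> > 0"
  shows "\<exists>T0::nat. (\<lambda>N::nat. SUP T\<in>{T::nat. even T \<and> 0 < T \<and> T0 \<le> T}.
            measure (Pdt \<delta> (enat T))
              {\<omega> \<in> space (Pdt \<delta> (enat T)).
                 \<bar>real (LN N \<omega>) / real N - s_inf \<delta>\<bar> > \<epsilon>}) \<longlonglongrightarrow> 0"
proof -
  obtain K C where bound: "eventually (\<lambda>N. \<forall>T>K. measure (Pdt \<delta> (enat T))
      {\<omega> \<in> space (Pdt \<delta> (enat T)). \<bar>real (LN N \<omega>) / real N - s_inf \<delta>\<bar> > \<epsilon>}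
      \<le> 2 * (real N * (1 + \<epsilon>) + 1) * C / (real N * \<epsilon> / 4)^2) sequentially"
    using uniform_deviation_bound[OF assms] .
  let ?S = "{T::nat. even T \<and> 0 < T \<and> Suc K \<le> T}"
  have nonempty: "?S \<noteq> {}" using exI[of "\<lambda>T. T \<in> ?S" "2 * Suc K"] by auto
  have "eventually (\<lambda>N. \<forall>T\<in>?S. measure (Pdt \<delta> (enat T))
      {\<omega> \<in> space (Pdt \<delta> (enat T)). \<bar>real (LN N \<omega>) / real N - s_inf \<delta>\<bar> > \<epsilon>}
      \<le> 2 * (real N * (1 + \<epsilon>) + 1) * C / (real N * \<epsilon> / 4)^2) sequentially"
    using bound by eventually_elim auto
  from SUP_tendsto_zero[OF nonempty _ this deviation_bound_tendsto_zero[OF assms(2)]]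
  show ?thesis by auto
qed

end
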